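(* Let $n\ge1$, let $\Delta\subset\mathbb{R}^n$ be an $n$-simplex with vertices $\mathbf{x}_0,\dots,\mathbf{x}_n$ and barycenter $\mathbf{b}=\frac{1}{n+1}(\mathbf{x}_0+\dots+\mathbf{x}_n)$. Then for every convex $f\colon\Delta\to\mathbb{R}$, $$\operatorname{Avg}(f,\Delta)\le \frac{1}{n+1}f(\mathbf{b})+\frac{n}{n+1}\cdot\frac{f(\mathbf{x}_0)+\dots+f(\mathbf{x}_n)}{n+1}.$$
   Context: $\mathbf{x}_0,\dots,\mathbf{x}_n\in\mathbb{R}^n$ are affinely independent and $\Delta=\operatorname{conv}\{\mathbf{x}_0,\dots,\mathbf{x}_n\}$. $\operatorname{Avg}(f,\Delta)=\frac{1}{\operatorname{Vol}_n(\Delta)}\int_\Delta f(\mathbf{x})\,d\mathbf{x}$ (Lebesgue measure on $\mathbb{R}^n$). *)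

theory Defs
  imports "HOL-Analysis.Analysis"
begin

definition Avg :: "('a::euclidean_space \<Rightarrow> real) \<Rightarrow> 'a set \<Rightarrow> real" where
  "Avg f S = integral S f / measure lebesgue S"

end

theory Submission
  imports Defs
begin

text \<open>
  Let \<open>m(y)\<close> be the least barycentric coordinate of \<open>y \<in> \<Delta>\<close>. Then
  \<open>y = (\<Sum>j. (\<lambda>\<^sub>j(y) - m(y)) x\<^sub>j) + (n + 1) m(y) b\<close> is a convex combination of the vertices
  and the barycenter \<open>b\<close>, so convexity gives
  \<open>f(y) \<le> (\<Sum>j. \<lambda>\<^sub>j(y) f(x\<^sub>j)) - m(y) (\<Sum>j. f(x\<^sub>j)) + (n + 1) m(y) f(b)\<close>.
  Integrating, it remains to show \<open>\<integral>\<lambda>\<^sub>j = vol \<Delta> / (n + 1)\<close> and \<open>\<integral>m = vol \<Delta> / (n + 1)\<^sup>2\<close>.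
  Both follow from one homogeneity principle: if \<open>g \<le> 1\<close> on a body \<open>K\<close>, \<open>g\<close> is positively
  homogeneous about a point \<open>p\<close>, and the dilation of \<open>K\<close> by \<open>s\<close> about \<open>p\<close> is the sublevel set
  \<open>{g \<le> s}\<close>, then comparing \<open>g\<close> with \<open>s\<close> and \<open>1\<close> on the shell between \<open>K\<close> and its dilation and
  letting \<open>s \<rightarrow> 1\<close> yields \<open>(n + 1) \<integral>\<^sub>K g = n vol K\<close>. It is applied to \<open>1 - \<lambda>\<^sub>j\<close> about \<open>x\<^sub>j\<close>
  and to \<open>1 - (n + 1) m\<close> about \<open>b\<close>.
\<close>

section \<open>Integrals over dilations\<close>

lemma continuous_on_compact_integrable:
  fixes g :: "'a::euclidean_space \<Rightarrow> 'b::euclidean_space"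
  assumes "continuous_on K g" "compact K"
  shows "g integrable_on K"
proof -
  have "bounded (g ` K)"
    using assms compact_continuous_image compact_imp_bounded by blast
  then obtain B where B: "\<And>x. x \<in> K \<Longrightarrow> norm (g x) \<le> B"
    by (auto simp: bounded_iff)
  have "K \<in> lmeasurable"
    using assms(2) by (rule lmeasurable_compact)
  then have "g absolutely_integrable_on K"
    by (intro measurable_bounded_by_integrable_imp_absolutely_integrable[where g="\<lambda>_. B"])
      (use assms B in \<open>auto intro: continuous_imp_measurable_on_sets_lebesgue integrable_on_const\<close>)
  then show ?thesis
    using set_lebesgue_integral_eq_integral(1) by blast
qed

lemma convex_on_bounded_integrable:
  fixes f :: "'a::euclidean_space \<Rightarrow> real"
  assumes cvx: "convex_on S f" and "convex S" "compact S" and B: "\<And>y. y \<in> S \<Longrightarrow> \<bar>f y\<bar> \<le> B"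
  shows "f integrable_on S"
proof -
  have "continuous_on (interior S) f"
    by (rule convex_on_continuous[OF open_interior convex_on_subset[OF cvx interior_subset]])
      (use \<open>convex S\<close> in \<open>rule convex_interior\<close>)
  moreover have "interior S \<in> lmeasurable"
    by (rule lmeasurable_open) (use \<open>compact S\<close> compact_imp_bounded bounded_interior in auto)
  ultimately have "f absolutely_integrable_on interior S"
    by (intro measurable_bounded_by_integrable_imp_absolutely_integrable[where g="\<lambda>_. B"])
      (use B interior_subset in \<open>auto intro: continuous_imp_measurable_on_sets_lebesgue integrable_on_const fmeasurableD\<close>)
  then have "f integrable_on interior S"
    using set_lebesgue_integral_eq_integral(1) by blast
  moreover have "negligible {y \<in> interior S - S. f y \<noteq> 0}"
  proof -
    have "{y \<in> interior S - S. f y \<noteq> 0} = {}"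
      using interior_subset by blast
    then show ?thesis by (metis negligible_empty)
  qed
  moreover have "negligible {y \<in> S - interior S. f y \<noteq> 0}"
    by (rule negligible_subset[OF negligible_convex_frontier[OF \<open>convex S\<close>]])
      (use closure_subset in \<open>auto simp: frontier_def\<close>)
  ultimately show ?thesis
    by (rule integrable_spike_set)
qed

lemma has_integral_dilation:
  fixes \<phi> :: "'a::euclidean_space \<Rightarrow> real"
  assumes phi: "(\<phi> has_integral I) K" and "bounded K" and s: "0 < s"
  shows "((\<lambda>y. \<phi> (p + (1/s) *\<^sub>R (y - p))) has_integral (s ^ DIM('a) * I)) ((\<lambda>w. p + s *\<^sub>R (w - p)) ` K)"
proof -
  obtain a b where Kab: "K \<subseteq> cbox a b"
    using \<open>bounded K\<close> bounded_subset_cbox_symmetric by metis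
  define F where "F y = (if y \<in> K then \<phi> y else 0)" for y
  have "(F has_integral I) (cbox a b)"
    unfolding F_def using phi Kab by simp
  from has_integral_affinity[OF this, of "1/s" "p - (1/s) *\<^sub>R p"]
  have H: "((\<lambda>y. F ((1/s) *\<^sub>R y + (p - (1/s) *\<^sub>R p))) has_integral (s ^ DIM('a) * I))
     ((\<lambda>w. s *\<^sub>R w + (p - s *\<^sub>R p)) ` cbox a b)"
    using s by (simp add: algebra_simps power_one_over)
  have dil: "(\<lambda>w. s *\<^sub>R w + (p - s *\<^sub>R p)) = (\<lambda>w. p + s *\<^sub>R (w - p))"
    by (auto simp: algebra_simps)
  have "(1/s) *\<^sub>R y + (p - (1/s) *\<^sub>R p) \<in> K \<longleftrightarrow> y \<in> (\<lambda>w. p + s *\<^sub>R (w - p)) ` K" for y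
  proof
    assume "(1/s) *\<^sub>R y + (p - (1/s) *\<^sub>R p) \<in> K"
    moreover have "y = p + s *\<^sub>R (((1/s) *\<^sub>R y + (p - (1/s) *\<^sub>R p)) - p)"
      using s by (simp add: algebra_simps)
    ultimately show "y \<in> (\<lambda>w. p + s *\<^sub>R (w - p)) ` K" by blast
  next
    assume "y \<in> (\<lambda>w. p + s *\<^sub>R (w - p)) ` K"
    then obtain w where "w \<in> K" "y = p + s *\<^sub>R (w - p)" by blast
    moreover have "(1/s) *\<^sub>R (p + s *\<^sub>R (w - p)) + (p - (1/s) *\<^sub>R p) = w"
      using s by (simp add: algebra_simps)
    ultimately show "(1/s) *\<^sub>R y + (p - (1/s) *\<^sub>R p) \<in> K" by simp
  qed
  then have restrict: "(\<lambda>y. F ((1/s) *\<^sub>R y + (p - (1/s) *\<^sub>R p))) =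
     (\<lambda>y. if y \<in> (\<lambda>w. p + s *\<^sub>R (w - p)) ` K then \<phi> (p + (1/s) *\<^sub>R (y - p)) else 0)"
    unfolding F_def by (auto simp: algebra_simps)
  have "(\<lambda>w. p + s *\<^sub>R (w - p)) ` K \<subseteq> (\<lambda>w. p + s *\<^sub>R (w - p)) ` cbox a b"
    using Kab by blast
  then show ?thesis
    using H has_integral_restrict unfolding dil restrict by blast
qed

text \<open>On the shell between \<open>K\<close> and its dilation \<open>Ks = {g \<le> s}\<close> we have \<open>s < g \<le> 1\<close>,
  while by homogeneity the integral of \<open>g\<close> over \<open>Ks\<close> is \<open>s ^ (n + 1)\<close> times that over \<open>K\<close>.\<close>

lemma homogeneous_gauge_integral_bounds:
  fixes K :: "'a::euclidean_space set" and g :: "'a \<Rightarrow> real"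
  assumes "bounded K"
    and g: "(g has_integral I) K"
    and one: "((\<lambda>y. 1) has_integral V) K"
    and sublevel: "(\<lambda>w. p + s *\<^sub>R (w - p)) ` K = {y \<in> K. g y \<le> s}"
    and hom: "\<And>y. y \<in> K \<Longrightarrow> g (p + s *\<^sub>R (y - p)) = s * g y"
    and le_one: "\<And>y. y \<in> K \<Longrightarrow> g y \<le> 1"
    and s: "0 < s"
  shows "s * V * (1 - s ^ DIM('a)) \<le> I * (1 - s ^ Suc DIM('a))"
    and "I * (1 - s ^ Suc DIM('a)) \<le> V * (1 - s ^ DIM('a))"
proof -
  define Ks where "Ks = (\<lambda>w. p + s *\<^sub>R (w - p)) ` K"
  have "g (p + (1/s) *\<^sub>R (y - p)) = g y / s" if "y \<in> Ks" for y
  proof -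
    obtain w where w: "w \<in> K" "y = p + s *\<^sub>R (w - p)"
      using \<open>y \<in> Ks\<close> Ks_def by blast
    then have "p + (1/s) *\<^sub>R (y - p) = w"
      using s by simp
    then show ?thesis
      using hom w s by simp
  qed
  moreover have "((\<lambda>y. g (p + (1/s) *\<^sub>R (y - p))) has_integral (s ^ DIM('a) * I)) Ks"
    unfolding Ks_def by (rule has_integral_dilation[OF g \<open>bounded K\<close> s])
  ultimately have "((\<lambda>y. g y / s) has_integral (s ^ DIM('a) * I)) Ks"
    using has_integral_spike_eq[of "{}" Ks "\<lambda>y. g (p + (1/s) *\<^sub>R (y - p))" "\<lambda>y. g y / s"] by auto
  from has_integral_mult_right[OF this, of s]
  have gKs: "(g has_integral (s ^ Suc DIM('a) * I)) Ks"
    using s by (simp add: mult_ac)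
  have oneKs: "((\<lambda>y. 1) has_integral (s ^ DIM('a) * V)) Ks"
    using has_integral_dilation[OF one \<open>bounded K\<close> s, of p] unfolding Ks_def by simp
  have "Ks \<subseteq> K"
    using sublevel Ks_def by blast
  then have gD: "(g has_integral (I - s ^ Suc DIM('a) * I)) (K - Ks)"
    and oneD: "((\<lambda>y. 1) has_integral (V - s ^ DIM('a) * V)) (K - Ks)"
    using has_integral_setdiff[OF g gKs] has_integral_setdiff[OF one oneKs] by auto
  have "((\<lambda>y. s) has_integral (s * (V - s ^ DIM('a) * V))) (K - Ks)"
    using has_integral_mult_right[OF oneD, of s] by simp
  then have "s * (V - s ^ DIM('a) * V) \<le> I - s ^ Suc DIM('a) * I"
    by (rule has_integral_le[OF _ gD]) (use sublevel Ks_def in auto)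
  moreover have "I - s ^ Suc DIM('a) * I \<le> V - s ^ DIM('a) * V"
    by (rule has_integral_le[OF gD oneD]) (use le_one in auto)
  ultimately show "s * V * (1 - s ^ DIM('a)) \<le> I * (1 - s ^ Suc DIM('a))"
    and "I * (1 - s ^ Suc DIM('a)) \<le> V * (1 - s ^ DIM('a))"
    by (simp_all add: algebra_simps)
qed

lemma homogeneous_gauge_integral:
  fixes K :: "'a::euclidean_space set" and g :: "'a \<Rightarrow> real"
  assumes "bounded K"
    and g: "(g has_integral I) K"
    and one: "((\<lambda>y. 1) has_integral V) K"
    and sublevel: "\<And>s. 0 < s \<Longrightarrow> s < 1 \<Longrightarrow> (\<lambda>w. p + s *\<^sub>R (w - p)) ` K = {y \<in> K. g y \<le> s}"
    and hom: "\<And>s y. 0 < s \<Longrightarrow> s < 1 \<Longrightarrow> y \<in> K \<Longrightarrow> g (p + s *\<^sub>R (y - p)) = s * g y"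
    and le_one: "\<And>y. y \<in> K \<Longrightarrow> g y \<le> 1"
  shows "(real DIM('a) + 1) * I = real DIM('a) * V"
proof -
  define n where "n = DIM('a)"
  define P where "P s = (\<Sum>i<Suc n. s ^ i)" for s :: real
  define Q where "Q s = (\<Sum>i<n. s ^ i)" for s :: real
  have bounds: "s * V * Q s \<le> I * P s \<and> I * P s \<le> V * Q s" if s: "0 < s" "s < 1" for s
  proof -
    have "1 - s ^ k = (1 - s) * (\<Sum>i<k. s ^ i)" for k
      by (simp add: one_diff_power_eq)
    moreover have "0 < 1 - s"
      using s by simp
    ultimately show ?thesis
      using homogeneous_gauge_integral_bounds[OF \<open>bounded K\<close> g one sublevel[OF s] hom[OF s] le_one s(1)]
      unfolding P_def Q_def n_def by (smt (verit) mult.assoc mult.commute mult_le_cancel_left_pos)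
  qed
  have "eventually (\<lambda>s. 0 < s \<and> s < (1::real)) (at_left 1)"
    using eventually_at_left_real[of 0 "1::real"] by simp
  then have "eventually (\<lambda>s. s * V * Q s \<le> I * P s) (at_left 1)"
    and "eventually (\<lambda>s. I * P s \<le> V * Q s) (at_left 1)"
    using bounds by (auto elim: eventually_mono)
  moreover have "((\<lambda>s. I * P s) \<longlongrightarrow> I * P 1) (at_left 1)"
    and "((\<lambda>s. V * Q s) \<longlongrightarrow> V * Q 1) (at_left 1)"
    and "((\<lambda>s. s * V * Q s) \<longlongrightarrow> 1 * V * Q 1) (at_left 1)"
    unfolding P_def Q_def by (intro tendsto_intros)+
  ultimately have "1 * V * Q 1 \<le> I * P 1" and "I * P 1 \<le> V * Q 1"
    using tendsto_le[OF trivial_limit_at_left_real] by blast+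
  then show ?thesis
    unfolding P_def Q_def n_def by (simp add: algebra_simps)
qed

section \<open>Barycentric coordinates\<close>

lemma affine_independent_coeffs_unique:
  fixes x :: "'i \<Rightarrow> 'a::real_vector"
  assumes "finite I" "inj_on x I" "\<not> affine_dependent (x ` I)"
    and "sum u I = sum v I" and "(\<Sum>i\<in>I. u i *\<^sub>R x i) = (\<Sum>i\<in>I. v i *\<^sub>R x i)"
    and "j \<in> I"
  shows "u j = v j"
proof (rule ccontr)
  assume ne: "u j \<noteq> v j"
  define w where "w z = u (inv_into I x z) - v (inv_into I x z)" for z
  have w: "w (x i) = u i - v i" if "i \<in> I" for i
    using inv_into_f_f[OF \<open>inj_on x I\<close> that] by (simp add: w_def)
  have "sum w (x ` I) = (\<Sum>i\<in>I. u i - v i)"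
    using sum.reindex[OF \<open>inj_on x I\<close>, of w] w by simp
  also have "\<dots> = 0"
    using assms(4) by (simp add: sum_subtractf)
  finally have sum0: "sum w (x ` I) = 0" .
  have "(\<Sum>z\<in>x ` I. w z *\<^sub>R z) = (\<Sum>i\<in>I. (u i - v i) *\<^sub>R x i)"
    using sum.reindex[OF \<open>inj_on x I\<close>, of "\<lambda>z. w z *\<^sub>R z"] w by simp
  also have "\<dots> = 0"
    using assms(5) by (simp add: scaleR_diff_left sum_subtractf)
  finally have "(\<Sum>z\<in>x ` I. w z *\<^sub>R z) = 0" .
  moreover have "x j \<in> x ` I" "w (x j) \<noteq> 0"
    using \<open>j \<in> I\<close> ne w by auto
  ultimately have "affine_dependent (x ` I)"
    using sum0 unfolding affine_dependent_explicit_finite[OF finite_imageI[OF \<open>finite I\<close>]] by blast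
  then show False
    using assms(3) by simp
qed

lemma continuous_on_Min:
  fixes F :: "'a::topological_space \<Rightarrow> 'i \<Rightarrow> 'b::linorder_topology"
  assumes "finite I" "I \<noteq> {}" "\<And>i. i \<in> I \<Longrightarrow> continuous_on S (\<lambda>y. F y i)"
  shows "continuous_on S (\<lambda>y. Min (F y ` I))"
  using assms
proof (induction I rule: finite_ne_induct)
  case (insert i I)
  then show ?case
    by (simp add: continuous_on_min)
qed simp

locale full_simplex =
  fixes x :: "nat \<Rightarrow> 'a::euclidean_space" and N :: nat
  assumes inj_vertices: "inj_on x {..N}"
    and affine_independent: "\<not> affine_dependent (x ` {..N})"
    and DIM_eq: "DIM('a) = N"
begin

abbreviation \<Delta> :: "'a set" where
  "\<Delta> \<equiv> convex hull (x ` {..N})"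

abbreviation barycenter :: 'a where
  "barycenter \<equiv> (1 / (real N + 1)) *\<^sub>R (\<Sum>i\<le>N. x i)"

lemma affine_hull_vertices: "affine hull (x ` {..N}) = UNIV"
proof -
  have "card (x ` {..N}) = Suc N"
    using card_image[OF inj_vertices] by simp
  then have "aff_dim (x ` {..N}) = int DIM('a)"
    using aff_dim_affine_independent[OF affine_independent] DIM_eq by simp
  then show ?thesis
    using aff_dim_eq_full by blast
qed

lemma barycentric_coords_exist: "\<exists>u. sum u {..N} = 1 \<and> (\<Sum>j\<le>N. u j *\<^sub>R x j) = y"
proof -
  obtain u where u: "sum u (x ` {..N}) = 1" "(\<Sum>v\<in>x ` {..N}. u v *\<^sub>R v) = y"
    using affine_hull_vertices affine_hull_finite[of "x ` {..N}"] by auto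
  then show ?thesis
    using sum.reindex[OF inj_vertices, of u] sum.reindex[OF inj_vertices, of "\<lambda>v. u v *\<^sub>R v"]
    by (intro exI[of _ "u \<circ> x"]) simp
qed

definition bary :: "'a \<Rightarrow> nat \<Rightarrow> real" where
  "bary y j = (if j \<le> N then (SOME u. sum u {..N} = 1 \<and> (\<Sum>j\<le>N. u j *\<^sub>R x j) = y) j else 0)"

lemma bary_sum: "sum (bary y) {..N} = 1"
  and bary_combination: "(\<Sum>j\<le>N. bary y j *\<^sub>R x j) = y"
proof -
  define u where "u = (SOME u. sum u {..N} = 1 \<and> (\<Sum>j\<le>N. u j *\<^sub>R x j) = y)"
  have "sum u {..N} = 1 \<and> (\<Sum>j\<le>N. u j *\<^sub>R x j) = y"
    unfolding u_def by (rule someI_ex[OF barycentric_coords_exist])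
  moreover have "bary y j = u j" if "j \<le> N" for j
    using that by (simp add: bary_def u_def)
  ultimately show "sum (bary y) {..N} = 1" "(\<Sum>j\<le>N. bary y j *\<^sub>R x j) = y"
    by simp_all
qed

lemma bary_unique:
  assumes "sum u {..N} = 1" "(\<Sum>j\<le>N. u j *\<^sub>R x j) = y" "j \<le> N"
  shows "bary y j = u j"
  using affine_independent_coeffs_unique[OF _ inj_vertices affine_independent, of "bary y" u j]
    bary_sum bary_combination assms by simp

lemma bary_beyond: "N < j \<Longrightarrow> bary y j = 0"
  by (simp add: bary_def)

lemma bary_affine_sum:
  assumes "finite I" "sum c I = 1"
  shows "bary (\<Sum>i\<in>I. c i *\<^sub>R p i) j = (\<Sum>i\<in>I. c i * bary (p i) j)"
proof (cases "j \<le> N")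
  case True
  show ?thesis
  proof (rule bary_unique[OF _ _ True])
    show "(\<Sum>j\<le>N. \<Sum>i\<in>I. c i * bary (p i) j) = 1"
      using assms by (subst sum.swap) (simp add: bary_sum flip: sum_distrib_left)
    have "(\<Sum>j\<le>N. (\<Sum>i\<in>I. c i * bary (p i) j) *\<^sub>R x j) = (\<Sum>i\<in>I. c i *\<^sub>R (\<Sum>j\<le>N. bary (p i) j *\<^sub>R x j))"
      by (simp add: scaleR_sum_left scaleR_sum_right sum.swap[of _ "{..N}"])
    then show "(\<Sum>j\<le>N. (\<Sum>i\<in>I. c i * bary (p i) j) *\<^sub>R x j) = (\<Sum>i\<in>I. c i *\<^sub>R p i)"
      by (simp add: bary_combination)
  qed
next
  case False
  then show ?thesis
    by (simp add: bary_beyond)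
qed

lemma bary_dilation: "bary (p + s *\<^sub>R (y - p)) j = (1 - s) * bary p j + s * bary y j"
  using bary_affine_sum[of UNIV "\<lambda>b. if b then s else 1 - s" "\<lambda>b. if b then y else p" j]
  by (simp add: UNIV_bool algebra_simps)

lemma continuous_on_bary: "continuous_on A (\<lambda>y. bary y j)"
proof -
  \<comment> \<open>\<open>y\<close> is an affine combination of \<open>0\<close> and the basis vectors, so \<open>bary y j\<close> is affine in the coordinates of \<open>y\<close>\<close>
  define c where "c y b = (if b = 0 then 1 - (\<Sum>b\<in>Basis. y \<bullet> b) else y \<bullet> b)" for y b :: 'a
  have on_Basis: "(\<Sum>b\<in>Basis. h (c y b) b) = (\<Sum>b\<in>Basis. h (y \<bullet> b) b)" for y and h :: "real \<Rightarrow> 'a \<Rightarrow> 'b::comm_monoid_add"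
    by (rule sum.cong) (auto simp: c_def)
  have "sum (c y) (insert 0 Basis) = 1" "(\<Sum>b\<in>insert 0 Basis. c y b *\<^sub>R b) = y" for y
    using on_Basis[of "\<lambda>t b. t" y] on_Basis[of "\<lambda>t b. t *\<^sub>R b" y]
    by (simp_all add: zero_not_in_Basis euclidean_representation) (simp add: c_def)
  then have "bary y j = c y 0 * bary 0 j + (\<Sum>b\<in>Basis. (y \<bullet> b) * bary b j)" for y
    using bary_affine_sum[of "insert 0 Basis" "c y" id j] on_Basis[of "\<lambda>t b. t * bary b j" y]
    by (simp add: zero_not_in_Basis)
  moreover have "continuous_on A (\<lambda>y. c y 0 * bary 0 j + (\<Sum>b\<in>Basis. (y \<bullet> b) * bary b j))"
    by (simp add: c_def) (intro continuous_intros)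
  ultimately show ?thesis
    by (metis (no_types, lifting) continuous_on_cong)
qed

lemma bary_vertex: "i \<le> N \<Longrightarrow> bary (x i) j = (if j = i then 1 else 0)"
proof (cases "j \<le> N")
  case True
  assume "i \<le> N"
  have "(\<Sum>k\<le>N. (if k = i then 1 else 0) *\<^sub>R x k) = (\<Sum>k\<le>N. if k = i then x k else 0)"
    by (rule sum.cong) auto
  with \<open>i \<le> N\<close> show ?thesis
    by (intro bary_unique[OF _ _ True]) auto
qed (auto simp: bary_beyond)

lemma bary_barycenter: "j \<le> N \<Longrightarrow> bary barycenter j = 1 / (real N + 1)"
  by (rule bary_unique) (auto simp: scaleR_sum_right)

lemma mem_simplex_iff: "y \<in> \<Delta> \<longleftrightarrow> (\<forall>j\<le>N. 0 \<le> bary y j)"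
proof
  assume "y \<in> \<Delta>"
  then obtain u where u: "\<forall>z\<in>x ` {..N}. 0 \<le> u z" "sum u (x ` {..N}) = 1" "(\<Sum>z\<in>x ` {..N}. u z *\<^sub>R z) = y"
    unfolding convex_hull_finite[OF finite_imageI[OF finite_atMost]] by blast
  have "sum (u \<circ> x) {..N} = 1" "(\<Sum>j\<le>N. (u \<circ> x) j *\<^sub>R x j) = y"
    using u sum.reindex[OF inj_vertices, of u] sum.reindex[OF inj_vertices, of "\<lambda>z. u z *\<^sub>R z"] by simp_all
  then show "\<forall>j\<le>N. 0 \<le> bary y j"
    using bary_unique u(1) by simp
next
  assume nonneg: "\<forall>j\<le>N. 0 \<le> bary y j"
  define u where "u z = bary y (inv_into {..N} x z)" for z
  have ux: "u (x j) = bary y j" if "j \<le> N" for j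
    using inv_into_f_f[OF inj_vertices] that by (simp add: u_def)
  have "\<forall>z\<in>x ` {..N}. 0 \<le> u z" "sum u (x ` {..N}) = 1" "(\<Sum>z\<in>x ` {..N}. u z *\<^sub>R z) = y"
    using nonneg ux bary_sum[of y] bary_combination[of y]
      sum.reindex[OF inj_vertices, of u] sum.reindex[OF inj_vertices, of "\<lambda>z. u z *\<^sub>R z"] by auto
  then show "y \<in> \<Delta>"
    unfolding convex_hull_finite[OF finite_imageI[OF finite_atMost]] by blast
qed

lemma bary_le_one: "y \<in> \<Delta> \<Longrightarrow> bary y j \<le> 1"
proof (cases "j \<le> N")
  case True
  assume "y \<in> \<Delta>"
  then have "bary y j \<le> sum (bary y) {..N}"
    using True by (intro member_le_sum) (auto simp: mem_simplex_iff)
  then show ?thesis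
    by (simp add: bary_sum)
qed (simp add: bary_beyond)

lemma vertex_in_simplex: "i \<le> N \<Longrightarrow> x i \<in> \<Delta>"
  by (simp add: hull_inc)

lemma barycenter_in_simplex: "barycenter \<in> \<Delta>"
  by (simp add: mem_simplex_iff bary_barycenter)

lemma dilation_simplex_eq:
  assumes "0 < s"
  shows "(\<lambda>w. p + s *\<^sub>R (w - p)) ` \<Delta> = {y. \<forall>k\<le>N. (1 - s) * bary p k \<le> bary y k}"
proof -
  have "0 \<le> bary (p + (1/s) *\<^sub>R (y - p)) k \<longleftrightarrow> (1 - s) * bary p k \<le> bary y k" for y k
  proof -
    have "bary (p + (1/s) *\<^sub>R (y - p)) k = (bary y k - (1 - s) * bary p k) / s"
      using bary_dilation[of p "1/s" y k] assms by (simp add: field_simps)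
    then show ?thesis
      using assms by (simp add: zero_le_divide_iff)
  qed
  then have "p + (1/s) *\<^sub>R (y - p) \<in> \<Delta> \<longleftrightarrow> (\<forall>k\<le>N. (1 - s) * bary p k \<le> bary y k)" for y
    by (simp add: mem_simplex_iff)
  moreover have "y = p + s *\<^sub>R ((p + (1/s) *\<^sub>R (y - p)) - p)"
    and "w = p + (1/s) *\<^sub>R ((p + s *\<^sub>R (w - p)) - p)" for y w
    using assms by simp_all
  ultimately show ?thesis
    by (smt (verit) image_iff mem_Collect_eq subsetI subset_antisym)
qed

lemma compact_simplex: "compact \<Delta>"
  by (simp add: compact_convex_hull finite_imp_compact)

lemma lmeasurable_simplex: "\<Delta> \<in> lmeasurable"
  by (rule lmeasurable_compact[OF compact_simplex])

lemma measure_simplex_pos: "0 < measure lebesgue \<Delta>"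
proof -
  have "card (x ` {..N}) = Suc DIM('a)"
    using card_image[OF inj_vertices] DIM_eq by simp
  then have "interior \<Delta> \<noteq> {}"
    using interior_convex_hull_eq_empty affine_independent by blast
  then have "\<not> negligible \<Delta>"
    using open_not_negligible[OF open_interior] interior_subset negligible_subset by blast
  then show ?thesis
    using negligible_iff_measure0[OF lmeasurable_simplex]
      measure_nonneg[of lebesgue \<Delta>] by linarith
qed

section \<open>Integrals of barycentric coordinates\<close>

lemma integral_homogeneous_on_simplex:
  assumes "continuous_on \<Delta> g"
    and sublevel: "\<And>s. 0 < s \<Longrightarrow> s < 1 \<Longrightarrow> (\<lambda>w. p + s *\<^sub>R (w - p)) ` \<Delta> = {y \<in> \<Delta>. g y \<le> s}"
    and hom: "\<And>s y. 0 < s \<Longrightarrow> s < 1 \<Longrightarrow> y \<in> \<Delta> \<Longrightarrow> g (p + s *\<^sub>R (y - p)) = s * g y"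
    and le_one: "\<And>y. y \<in> \<Delta> \<Longrightarrow> g y \<le> 1"
  shows "(real N + 1) * integral \<Delta> g = real N * measure lebesgue \<Delta>"
proof -
  have "((\<lambda>y. 1) has_integral measure lebesgue \<Delta>) \<Delta>"
    using lmeasure_integral[OF lmeasurable_simplex] integrable_on_const[OF lmeasurable_simplex]
    by (metis has_integral_integral)
  moreover have "(g has_integral integral \<Delta> g) \<Delta>"
    using continuous_on_compact_integrable[OF assms(1) compact_simplex] by (simp add: has_integral_integral)
  ultimately show ?thesis
    using homogeneous_gauge_integral[OF compact_imp_bounded[OF compact_simplex] _ _ sublevel hom le_one]
    by (simp add: DIM_eq)
qed

lemma integral_bary:
  assumes "j \<le> N"
  shows "integral \<Delta> (\<lambda>y. bary y j) = measure lebesgue \<Delta> / (real N + 1)"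
proof -
  have "(\<lambda>w. x j + s *\<^sub>R (w - x j)) ` \<Delta> = {y \<in> \<Delta>. 1 - bary y j \<le> s}" if "0 < s" "s < 1" for s
  proof -
    have "(\<forall>k\<le>N. (1 - s) * bary (x j) k \<le> bary y k) \<longleftrightarrow> (\<forall>k\<le>N. 0 \<le> bary y k) \<and> 1 - bary y j \<le> s" for y
    proof -
      have "(1 - s) * bary (x j) k \<le> bary y k \<longleftrightarrow> (if k = j then 1 - s \<le> bary y j else 0 \<le> bary y k)" for k
        using assms by (simp add: bary_vertex)
      then show ?thesis
        using that assms by (smt (verit, best))
    qed
    then show ?thesis
      unfolding dilation_simplex_eq[OF \<open>0 < s\<close>] mem_simplex_iff by blast
  qed
  moreover have "1 - bary (x j + s *\<^sub>R (y - x j)) j = s * (1 - bary y j)" for s y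
    using bary_dilation[of "x j" s y j] bary_vertex[OF assms, of j] by (simp add: algebra_simps)
  ultimately have "(real N + 1) * integral \<Delta> (\<lambda>y. 1 - bary y j) = real N * measure lebesgue \<Delta>"
    by (intro integral_homogeneous_on_simplex) (auto intro!: continuous_intros continuous_on_bary simp: mem_simplex_iff assms)
  moreover have "integral \<Delta> (\<lambda>y. 1 - bary y j) = measure lebesgue \<Delta> - integral \<Delta> (\<lambda>y. bary y j)"
    using integral_diff[OF integrable_on_const[OF lmeasurable_simplex]
        continuous_on_compact_integrable[OF continuous_on_bary compact_simplex]]
      lmeasure_integral[OF lmeasurable_simplex] by simp
  ultimately show ?thesis
    by (simp add: field_simps)
qed

definition min_bary :: "'a \<Rightarrow> real" where
  "min_bary y = Min (bary y ` {..N})"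

lemma min_bary_le: "j \<le> N \<Longrightarrow> min_bary y \<le> bary y j"
  by (simp add: min_bary_def)

lemma min_bary_ge_iff: "t \<le> min_bary y \<longleftrightarrow> (\<forall>j\<le>N. t \<le> bary y j)"
  by (auto simp: min_bary_def)

lemma min_bary_nonneg: "y \<in> \<Delta> \<Longrightarrow> 0 \<le> min_bary y"
  by (simp add: min_bary_ge_iff mem_simplex_iff)

lemma continuous_on_min_bary: "continuous_on A min_bary"
  unfolding min_bary_def by (intro continuous_on_Min continuous_on_bary) auto

lemma min_bary_dilation_barycenter:
  assumes "0 \<le> s"
  shows "min_bary (barycenter + s *\<^sub>R (y - barycenter)) = (1 - s) / (real N + 1) + s * min_bary y"
proof -
  have "mono (\<lambda>t. (1 - s) / (real N + 1) + s * t)"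
    using assms by (intro monoI) (simp add: mult_left_mono)
  then have "(1 - s) / (real N + 1) + s * min_bary y = Min ((\<lambda>j. (1 - s) / (real N + 1) + s * bary y j) ` {..N})"
    unfolding min_bary_def by (subst mono_Min_commute) (auto simp: image_image)
  also have "\<dots> = min_bary (barycenter + s *\<^sub>R (y - barycenter))"
    unfolding min_bary_def by (intro arg_cong[where f=Min] image_cong) (simp_all add: bary_dilation bary_barycenter)
  finally show ?thesis ..
qed

lemma integral_min_bary: "integral \<Delta> min_bary = measure lebesgue \<Delta> / (real N + 1)^2"
proof -
  have "(\<lambda>w. barycenter + s *\<^sub>R (w - barycenter)) ` \<Delta> = {y \<in> \<Delta>. 1 - (real N + 1) * min_bary y \<le> s}"
    if "0 < s" "s < 1" for s
  proof -
    have "1 - (real N + 1) * min_bary y \<le> s \<longleftrightarrow> (1 - s) / (real N + 1) \<le> min_bary y" for y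
      by (simp add: field_simps)
    moreover have "0 \<le> (1 - s) / (real N + 1)"
      using that by simp
    ultimately show ?thesis
      unfolding dilation_simplex_eq[OF \<open>0 < s\<close>] mem_simplex_iff min_bary_ge_iff
      by (auto simp: bary_barycenter)
  qed
  moreover have "1 - (real N + 1) * min_bary (barycenter + s *\<^sub>R (y - barycenter)) = s * (1 - (real N + 1) * min_bary y)"
    if "0 < s" for s y
    using min_bary_dilation_barycenter[of s y] that by (simp add: field_simps)
  ultimately have "(real N + 1) * integral \<Delta> (\<lambda>y. 1 - (real N + 1) * min_bary y) = real N * measure lebesgue \<Delta>"
    by (intro integral_homogeneous_on_simplex) (auto intro!: continuous_intros continuous_on_min_bary simp: min_bary_nonneg)
  moreover have "integral \<Delta> (\<lambda>y. 1 - (real N + 1) * min_bary y) = measure lebesgue \<Delta> - (real N + 1) * integral \<Delta> min_bary"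
    using integral_diff[OF integrable_on_const[OF lmeasurable_simplex]
        integrable_on_cmult_left[OF continuous_on_compact_integrable[OF continuous_on_min_bary compact_simplex]]]
      lmeasure_integral[OF lmeasurable_simplex] by simp
  ultimately have "(real N + 1) * (measure lebesgue \<Delta> - (real N + 1) * integral \<Delta> min_bary)
      = real N * measure lebesgue \<Delta>"
    by simp
  then have "(real N + 1)^2 * integral \<Delta> min_bary = measure lebesgue \<Delta>"
    by (simp add: algebra_simps power2_eq_square)
  then show ?thesis
    by (simp add: field_simps)
qed

section \<open>Convex functions on a simplex\<close>

lemma N_pos: "0 < N"
  using DIM_eq DIM_positive by metis

context
  fixes f :: "'a \<Rightarrow> real"
  assumes convex_f: "convex_on \<Delta> f"
begin

lemma convex_on_simplex_le_bary:
  assumes "y \<in> \<Delta>"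
  shows "f y \<le> (\<Sum>j\<le>N. bary y j * f (x j))"
proof -
  have "f (\<Sum>j\<le>N. bary y j *\<^sub>R x j) \<le> (\<Sum>j\<le>N. bary y j * f (x j))"
    by (rule convex_on_sum[OF _ _ convex_f]) (use assms bary_sum mem_simplex_iff vertex_in_simplex in auto)
  then show ?thesis
    by (simp add: bary_combination)
qed

lemma convex_on_simplex_bounded_above: "y \<in> \<Delta> \<Longrightarrow> f y \<le> (\<Sum>j\<le>N. \<bar>f (x j)\<bar>)"
proof -
  assume "y \<in> \<Delta>"
  have "f (x j) \<le> (\<Sum>i\<le>N. \<bar>f (x i)\<bar>)" if "j \<le> N" for j
    using member_le_sum[of j "{..N}" "\<lambda>i. \<bar>f (x i)\<bar>"] that by simp
  then have "(\<Sum>j\<le>N. bary y j * f (x j)) \<le> (\<Sum>j\<le>N. bary y j * (\<Sum>i\<le>N. \<bar>f (x i)\<bar>))"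
    using \<open>y \<in> \<Delta>\<close> by (intro sum_mono mult_left_mono) (auto simp: mem_simplex_iff)
  then show ?thesis
    using convex_on_simplex_le_bary[OF \<open>y \<in> \<Delta>\<close>] by (simp add: bary_sum flip: sum_distrib_right)
qed

text \<open>The barycenter \<open>b\<close> divides the segment from \<open>y\<close> to \<open>y' = b - (y - b) / N \<in> \<Delta>\<close> in the ratio \<open>N : 1\<close>.\<close>

lemma convex_on_simplex_bounded_below:
  assumes A: "\<And>z. z \<in> \<Delta> \<Longrightarrow> f z \<le> A" and "y \<in> \<Delta>"
  shows "(real N + 1) * f barycenter - real N * A \<le> f y"
proof -
  define y' where "y' = barycenter + (- 1 / real N) *\<^sub>R (y - barycenter)"
  have "bary y' k = (1 - bary y k) / real N" if "k \<le> N" for k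
    unfolding y'_def bary_dilation bary_barycenter[OF that] using N_pos by (simp add: field_simps)
  then have "y' \<in> \<Delta>"
    using bary_le_one[OF \<open>y \<in> \<Delta>\<close>] by (simp add: mem_simplex_iff)
  define t where "t = 1 / (real N + 1)"
  have "(1 - t) * (- 1 / real N) = - t"
    using N_pos by (simp add: t_def field_simps)
  then have "(1 - t) *\<^sub>R y' + t *\<^sub>R y = (1 - t) *\<^sub>R barycenter + (- t) *\<^sub>R (y - barycenter) + t *\<^sub>R y"
    unfolding y'_def scaleR_add_right scaleR_scaleR by (simp only:)
  also have "\<dots> = barycenter"
    using scaleR_collapse[of t barycenter] by (simp add: algebra_simps)
  finally have "(1 - t) *\<^sub>R y' + t *\<^sub>R y = barycenter" .
  then have "f barycenter \<le> (1 - t) * f y' + t * f y"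
    using convex_onD[OF convex_f, of t y' y] \<open>y' \<in> \<Delta>\<close> \<open>y \<in> \<Delta>\<close> by (simp add: t_def)
  also have "\<dots> \<le> (1 - t) * A + t * f y"
    using A[OF \<open>y' \<in> \<Delta>\<close>] by (intro add_right_mono mult_left_mono) (simp_all add: t_def)
  finally have "(real N + 1) * f barycenter \<le> (real N + 1) * ((1 - t) * A + t * f y)"
    by (rule mult_left_mono) simp
  also have "\<dots> = ((real N + 1) * (1 - t)) * A + ((real N + 1) * t) * f y"
    by (simp add: algebra_simps)
  also have "\<dots> = real N * A + f y"
    by (simp add: t_def right_diff_distrib)
  finally show ?thesis
    by simp
qed

lemma convex_on_simplex_integrable: "f integrable_on \<Delta>"
proof -
  define A where "A = (\<Sum>j\<le>N. \<bar>f (x j)\<bar>)"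
  have "\<bar>f y\<bar> \<le> \<bar>(real N + 1) * f barycenter - real N * A\<bar> + \<bar>A\<bar>" if "y \<in> \<Delta>" for y
    using convex_on_simplex_bounded_above[OF that]
      convex_on_simplex_bounded_below[OF convex_on_simplex_bounded_above that]
    unfolding A_def by linarith
  then show ?thesis
    by (intro convex_on_bounded_integrable[OF convex_f convex_convex_hull compact_simplex])
qed

lemma convex_on_simplex_le_min_bary_bound:
  assumes "y \<in> \<Delta>"
  shows "f y \<le> (\<Sum>j\<le>N. bary y j * f (x j)) - min_bary y * (\<Sum>j\<le>N. f (x j))
    + (real N + 1) * min_bary y * f barycenter"
proof -
  define m where "m = min_bary y"
  define a where "a k = (if k \<le> N then bary y k - m else (real N + 1) * m)" for k
  define z where "z k = (if k \<le> N then x k else barycenter)" for k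
  have "(\<Sum>k\<le>N. a k) = (\<Sum>k\<le>N. bary y k - m)"
    by (rule sum.cong) (auto simp: a_def)
  then have "(\<Sum>k\<le>Suc N. a k) = 1"
    by (simp add: a_def sum_subtractf bary_sum algebra_simps)
  moreover have "0 \<le> a k" for k
    using min_bary_le[of k y] min_bary_nonneg[OF assms] by (simp add: a_def m_def)
  moreover have "z k \<in> \<Delta>" for k
    by (simp add: z_def vertex_in_simplex barycenter_in_simplex)
  ultimately have "f (\<Sum>k\<le>Suc N. a k *\<^sub>R z k) \<le> (\<Sum>k\<le>Suc N. a k * f (z k))"
    by (intro convex_on_sum[OF _ _ convex_f]) auto
  moreover have "(\<Sum>k\<le>N. a k *\<^sub>R z k) = (\<Sum>k\<le>N. bary y k *\<^sub>R x k - m *\<^sub>R x k)"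
    and "(\<Sum>k\<le>N. a k * f (z k)) = (\<Sum>k\<le>N. bary y k * f (x k) - m * f (x k))"
    by (auto intro!: sum.cong simp: a_def z_def algebra_simps)
  then have "(\<Sum>k\<le>Suc N. a k *\<^sub>R z k) = y"
    and "(\<Sum>k\<le>Suc N. a k * f (z k)) = (\<Sum>j\<le>N. bary y j * f (x j)) - m * (\<Sum>j\<le>N. f (x j))
      + (real N + 1) * m * f barycenter"
    by (simp_all add: a_def z_def sum_subtractf bary_combination scaleR_sum_right sum_distrib_left)
  ultimately show ?thesis
    by (simp add: m_def)
qed

theorem Avg_convex_on_simplex_le:
  "Avg f \<Delta> \<le> 1 / (real N + 1) * f barycenter + real N / (real N + 1) * ((\<Sum>j\<le>N. f (x j)) / (real N + 1))"
proof -
  define V where "V = measure lebesgue \<Delta>"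
  define S where "S = (\<Sum>j\<le>N. f (x j))"
  have "((\<lambda>y. bary y j) has_integral V / (real N + 1)) \<Delta>" if "j \<le> N" for j
    using continuous_on_compact_integrable[OF continuous_on_bary compact_simplex] integral_bary[OF that]
    unfolding V_def by (metis has_integral_integral)
  moreover have "(min_bary has_integral V / (real N + 1)^2) \<Delta>"
    using continuous_on_compact_integrable[OF continuous_on_min_bary compact_simplex] integral_min_bary
    unfolding V_def by (metis has_integral_integral)
  ultimately have "((\<lambda>y. (\<Sum>j\<le>N. bary y j * f (x j)) - min_bary y * S + (real N + 1) * min_bary y * f barycenter)
      has_integral (\<Sum>j\<le>N. V / (real N + 1) * f (x j)) - V / (real N + 1)^2 * S
        + (real N + 1) * (V / (real N + 1)^2) * f barycenter) \<Delta>"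
    by (intro has_integral_add has_integral_diff has_integral_sum has_integral_mult_left has_integral_mult_right) auto
  then have "integral \<Delta> f \<le> (\<Sum>j\<le>N. V / (real N + 1) * f (x j)) - V / (real N + 1)^2 * S
      + (real N + 1) * (V / (real N + 1)^2) * f barycenter"
    by (rule has_integral_le[OF integrable_integral[OF convex_on_simplex_integrable]])
      (simp add: S_def convex_on_simplex_le_min_bary_bound)
  also have "\<dots> = V * (1 / (real N + 1) * f barycenter + real N / (real N + 1) * (S / (real N + 1)))"
  proof -
    have "V / c * S - V / c^2 * S + c * (V / c^2) * F = V * (1 / c * F + (c - 1) / c * (S / c))"
      if "c \<noteq> 0" for c F :: real
      using that by (simp add: field_simps power2_eq_square)
    moreover have "(\<Sum>j\<le>N. V / (real N + 1) * f (x j)) = V / (real N + 1) * S"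
      by (simp add: S_def sum_distrib_left)
    ultimately show ?thesis
      by (metis add_diff_cancel_left' of_nat_Suc of_nat_neq_0 add.commute)
  qed
  finally show ?thesis
    using measure_simplex_pos by (simp add: Avg_def V_def S_def pos_divide_le_eq mult.commute)
qed

end

end

theorem theorem8:
  fixes x :: "nat \<Rightarrow> real ^ 'n" and f :: "real ^ 'n \<Rightarrow> real"
  assumes inj: "inj_on x {..CARD('n)}"
    and indep: "\<not> affine_dependent (x ` {..CARD('n)})"
    and cvx: "convex_on (convex hull (x ` {..CARD('n)})) f"
  shows "Avg f (convex hull (x ` {..CARD('n)}))
    \<le> 1 / (real CARD('n) + 1) * f ((1 / (real CARD('n) + 1)) *\<^sub>R (\<Sum>i\<le>CARD('n). x i))
      + real CARD('n) / (real CARD('n) + 1) * ((\<Sum>i\<le>CARD('n). f (x i)) / (real CARD('n) + 1))"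
proof -
  interpret full_simplex x "CARD('n)"
    by unfold_locales (simp_all add: inj indep)
  show ?thesis
    by (rule Avg_convex_on_simplex_le[OF cvx])
qed

end
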